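(* Assume the setting, hypotheses and Rothe scheme described in the context, and for every sufficiently small $\tau=T/N$ let $\{u_\tau^n\}_{n=1}^N$, $\{\xi_\tau^n\}_{n=1}^N$ be a solution of Problem $\mathcal P_\tau$. Then $u_\tau^1-u_\tau^0\to0$ strongly in $H$ as $\tau\to0$.
   Context: $V$ is a real reflexive separable Banach space with norm $\|\cdot\|$, $H$ is a real separable Hilbert space with inner product $(\cdot,\cdot)$ and norm $|\cdot|$, identified with its dual, and $V\subset H\subset V^*$ with dense continuous embeddings, the embedding $V\subset H$ being compact; $\langle\cdot,\cdot\rangle$ is the $V^*\times V$ duality pairing, with $\langle u,v\rangle=(u,v)$ for $u\in H$, $v\in V$. $U$ is a reflexive Banach space, $T>0$. For locally Lipschitz $J\colon U\to\mathbb R$, $J^0(x;v)=\limsup_{y\to x,\lambda\downarrow0}\frac{J(y+\lambda v)-J(y)}{\lambda}$ and $\partial J(x)=\{\xi\in U^*:J^0(x;v)\ge\langle\xi,v\rangle_{U^*\times U}\ \forall v\in U\}$ (Clarke subdifferential); $\iota^*$ is the adjoint of $\iota$. Hypotheses: (H(A)) $A\colon V\to V^*$ is pseudomonotone (whenever $v_n\to v$ weakly in $V$ and $\limsup_n\langle Av_n,v_n-v\rangle\le0$, then $\langle Av,v-y\rangle\le\liminf_n\langle Av_n,v_n-y\rangle$ for all $y\in V$), $\|Av\|_{V^*}\le a+b\|v\|$ ($a\ge0,b>0$), $\langle Av,v\rangle\ge\alpha\|v\|^2-\beta|v|^2$ ($\alpha>0,\beta\ge0$) for all $v\in V$. (H(J))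 $J$ is locally Lipschitz and $\|\xi\|_{U^*}\le d(1+\|u\|_U)$ for all $u\in U$, $\xi\in\partial J(u)$, $d>0$. (H($\iota$)) $\iota\colon V\to U$ is linear, continuous, compact, and $\iota=\iota_2\circ\iota_1$ where $Z$ is a Banach space with $V\subset Z\subset H$, $V\subset Z$ compact, $Z\subset H$ continuous, $\iota_1\colon V\to Z$ the identity and $\iota_2\colon Z\to U$ linear continuous. (H(f)) $f\in L^2(0,T;V^* )$. (H(0)) $u_0\in H$. Rothe scheme: for $N\in\mathbb N$, $\tau=T/N$, an element $u_\tau^0\in V$ is given for each $\tau$, such that $u_\tau^0\to u_0$ strongly in $H$ as $\tau\to0$ and $\|u_\tau^0\|\le c_0/\sqrt\tau$ with $c_0$ independent of $\tau$. Set $f_\tau^1=\frac1\tau\int_0^\tau f\,dt$ and $f_\tau^n=\frac{3}{2\tau}\int_{(n-1)\tau}^{n\tau}f\,dt-\frac1{2\tau}\int_{(n-2)\tau}^{(n-1)\tau}f\,dt$, $n=2,\dots,N$. Problem $\mathcal P_\tau$: find $\{u_\tau^n\}_{n=1}^N\subset V$ and $\{\xi_\tau^n\}_{n=1}^N\subset U^*$ with $\frac1\tau(u_\tau^1-u_\tau^0)+Au_\tau^1+\iota^*\xi_\tau^1=f_\tau^1$, $\xi_\tau^1\in\partial J(\iota u_\tau^1)$, and for $n=2,\dots,N$: $\frac1\tau(\frac32u_\tau^n-2u_\tau^{n-1}+\frac12u_\tau^{n-2})+Au_\tau^n+\iota^*\xi_\tau^n=f_\tau^n$, $\xi_\tau^n\in\partial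 J(\iota u_\tau^n)$. *)

theory Defs
  imports "HOL-Analysis.Analysis"
begin

definition weak_conv :: "(nat \<Rightarrow> 'a::real_normed_vector) \<Rightarrow> 'a \<Rightarrow> bool" where
  "weak_conv xs x \<longleftrightarrow> (\<forall>g :: 'a \<Rightarrow>\<^sub>L real. (\<lambda>n. blinfun_apply g (xs n)) \<longlonglongrightarrow> blinfun_apply g x)"

definition reflexive_space :: "'a::real_normed_vector itself \<Rightarrow> bool" where
  "reflexive_space _ \<longleftrightarrow>
     (\<forall>\<phi> :: ('a \<Rightarrow>\<^sub>L real) \<Rightarrow>\<^sub>L real. \<exists>x::'a. \<forall>g. blinfun_apply \<phi> g = blinfun_apply g x)"

definition compact_map :: "('a::real_normed_vector \<Rightarrow> 'b::real_normed_vector) \<Rightarrow> bool" where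
  "compact_map L \<longleftrightarrow> (\<forall>S. bounded S \<longrightarrow> compact (closure (L ` S)))"

definition locally_lipschitz :: "('a::metric_space \<Rightarrow> real) \<Rightarrow> bool" where
  "locally_lipschitz J \<longleftrightarrow>
     (\<forall>x. \<exists>r>0. \<exists>L. \<forall>y\<in>ball x r. \<forall>z\<in>ball x r. \<bar>J y - J z\<bar> \<le> L * dist y z)"

definition clarke_dd :: "('a::real_normed_vector \<Rightarrow> real) \<Rightarrow> 'a \<Rightarrow> 'a \<Rightarrow> ereal" where
  "clarke_dd J x v =
     Limsup (at (x, 0) within (UNIV \<times> {0<..}))
       (\<lambda>p. ereal ((J (fst p + snd p *\<^sub>R v) - J (fst p)) / snd p))"

definition clarke_subdiff :: "('a::real_normed_vector \<Rightarrow> real) \<Rightarrow> 'a \<Rightarrow> ('a \<Rightarrow>\<^sub>L real) set" where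
  "clarke_subdiff J x = {\<xi>. \<forall>v. ereal (blinfun_apply \<xi> v) \<le> clarke_dd J x v}"

text \<open>The dual space V* is represented by a (separable Banach) type 'w together with an
  isometric linear bijection D : 'w \<rightarrow> (V \<Rightarrow>L real).  The duality pairing:\<close>
definition pair :: "('w \<Rightarrow> ('v::real_normed_vector \<Rightarrow>\<^sub>L real)) \<Rightarrow> 'w \<Rightarrow> 'v \<Rightarrow> real" where
  "pair D w v = blinfun_apply (D w) v"

definition embH :: "('w \<Rightarrow> ('v::real_normed_vector \<Rightarrow>\<^sub>L real)) \<Rightarrow> ('v \<Rightarrow> 'h::real_inner) \<Rightarrow> 'h \<Rightarrow> 'w" where
  "embH D iV h = inv D (Blinfun (\<lambda>v. inner h (iV v)))"

definition adj :: "('w \<Rightarrow> ('v::real_normed_vector \<Rightarrow>\<^sub>L real)) \<Rightarrow> ('v \<Rightarrow> 'u::real_normed_vector)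
                    \<Rightarrow> ('u \<Rightarrow>\<^sub>L real) \<Rightarrow> 'w" where
  "adj D \<iota> \<xi> = inv D (Blinfun (\<lambda>v. blinfun_apply \<xi> (\<iota> v)))"

definition pseudomonotone :: "('w \<Rightarrow> ('v::real_normed_vector \<Rightarrow>\<^sub>L real)) \<Rightarrow> ('v \<Rightarrow> 'w) \<Rightarrow> bool" where
  "pseudomonotone D A \<longleftrightarrow>
     (\<forall>vs v. weak_conv vs v \<longrightarrow>
        limsup (\<lambda>n. ereal (pair D (A (vs n)) (vs n - v))) \<le> 0 \<longrightarrow>
        (\<forall>y. ereal (pair D (A v) (v - y)) \<le> liminf (\<lambda>n. ereal (pair D (A (vs n)) (vs n - y)))))"

text \<open>Averaged right-hand sides of the Rothe (BDF2) scheme, tau = T/N.\<close>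
definition f_tau :: "real \<Rightarrow> (real \<Rightarrow> 'w::{banach,second_countable_topology}) \<Rightarrow> nat \<Rightarrow> nat \<Rightarrow> 'w" where
  "f_tau T f N n =
     (let \<tau> = T / real N in
      if n = 1 then (1 / \<tau>) *\<^sub>R (LINT t:{0..\<tau>}|lborel. f t)
      else (3 / (2 * \<tau>)) *\<^sub>R (LINT t:{(real n - 1) * \<tau> .. real n * \<tau>}|lborel. f t)
           - (1 / (2 * \<tau>)) *\<^sub>R (LINT t:{(real n - 2) * \<tau> .. (real n - 1) * \<tau>}|lborel. f t))"

definition rothe_solution ::
  "('w::{banach,second_countable_topology} \<Rightarrow> ('v::real_normed_vector \<Rightarrow>\<^sub>L real)) \<Rightarrow> ('v \<Rightarrow> 'h::real_inner)
   \<Rightarrow> ('v \<Rightarrow> 'w) \<Rightarrow> ('v \<Rightarrow> 'u::real_normed_vector) \<Rightarrow> ('u \<Rightarrow> real) \<Rightarrow> (real \<Rightarrow> 'w) \<Rightarrow> real \<Rightarrow> nat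
   \<Rightarrow> 'v \<Rightarrow> (nat \<Rightarrow> 'v) \<Rightarrow> (nat \<Rightarrow> ('u \<Rightarrow>\<^sub>L real)) \<Rightarrow> bool" where
  "rothe_solution D iV A \<iota> J f T N u0 u \<xi> \<longleftrightarrow>
     (let \<tau> = T / real N in
       u 0 = u0 \<and>
       embH D iV (iV ((1 / \<tau>) *\<^sub>R (u 1 - u 0))) + A (u 1) + adj D \<iota> (\<xi> 1) = f_tau T f N 1 \<and>
       (\<forall>n. 2 \<le> n \<and> n \<le> N \<longrightarrow>
          embH D iV (iV ((1 / \<tau>) *\<^sub>R ((3/2) *\<^sub>R u n - 2 *\<^sub>R u (n - 1) + (1/2) *\<^sub>R u (n - 2))))
            + A (u n) + adj D \<iota> (\<xi> n) = f_tau T f N n) \<and>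
       (\<forall>n. 1 \<le> n \<and> n \<le> N \<longrightarrow> \<xi> n \<in> clarke_subdiff J (\<iota> (u n))))"

end

theory Submission
  imports Defs
begin

(*
  Test the first step of the scheme with u_tau^1 - v for a fixed v in V.  The coercivity of A
  absorbs the growth of the Clarke subgradient (through Ehrling's inequality for the compact
  map iota) and the load term, whose size is controlled by the integral of |f|^2 over [0, tau];
  the remaining H-norm of u_tau^1 is absorbed for small tau.  This gives
  |u_tau^1 - u_tau^0|^2 <= 2 |u_tau^0 - v|^2 + r_v(tau) with r_v(tau) -> 0, and since
  u_tau^0 -> u_0 in H and V is dense in H, |u_0 - v| can be made arbitrarily small.
*)

lemma young_inequality_real:
  fixes c x k :: real
  assumes "k > 0"
  shows "c * x \<le> x\<^sup>2 / k + k * c\<^sup>2 / 4"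
proof -
  have "0 \<le> (x - k * c / 2)\<^sup>2 / k" using assms by simp
  also have "\<dots> = x\<^sup>2 / k + k * c\<^sup>2 / 4 - c * x"
    using assms by (simp add: power2_eq_square field_simps)
  finally show ?thesis by simp
qed

lemma square_sum_le:
  fixes x y :: real
  shows "(x + y)\<^sup>2 \<le> 2 * x\<^sup>2 + 2 * y\<^sup>2"
  using sum_squares_bound[of x y] by (simp add: power2_sum)

lemma set_integrable_on_initial_interval:
  fixes f :: "real \<Rightarrow> 'w::{banach,second_countable_topology}"
  assumes f_meas: "(\<lambda>t. indicator {0..T} t *\<^sub>R f t) \<in> borel_measurable lborel"
    and f_L2: "set_integrable lborel {0..T} (\<lambda>t. (norm (f t))\<^sup>2)"
    and "s \<le> T"
  shows "set_integrable lborel {0..s} (\<lambda>t. (norm (f t))\<^sup>2)"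
    and "set_integrable lborel {0..s} (\<lambda>t. norm (f t))"
proof -
  show L2: "set_integrable lborel {0..s} (\<lambda>t. (norm (f t))\<^sup>2)"
    using f_L2 by (rule set_integrable_subset) (use \<open>s \<le> T\<close> in auto)
  have "(\<lambda>t. indicator {0..s} t *\<^sub>R norm (indicator {0..T} t *\<^sub>R f t)) \<in> borel_measurable lborel"
    using f_meas by measurable
  also have "(\<lambda>t. indicator {0..s} t *\<^sub>R norm (indicator {0..T} t *\<^sub>R f t))
              = (\<lambda>t. indicator {0..s} t *\<^sub>R norm (f t))"
    using \<open>s \<le> T\<close> by (auto simp: indicator_def)
  finally have meas: "(\<lambda>t. indicator {0..s} t *\<^sub>R norm (f t)) \<in> borel_measurable lborel" .
  have "set_integrable lborel {0..s} (\<lambda>t. (norm (f t))\<^sup>2 + 1)"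
    using L2 by (intro set_integral_add)
      (auto simp: set_integrable_def emeasure_lborel_Icc_eq intro!: integrable_real_indicator)
  then show "set_integrable lborel {0..s} (\<lambda>t. norm (f t))"
    unfolding set_integrable_def
  proof (rule Bochner_Integration.integrable_bound[OF _ meas], intro AE_I2)
    fix t
    have "norm (f t) \<le> (norm (f t))\<^sup>2 + 1"
      using young_inequality_real[of 1 1 "norm (f t)"] by simp
    then show "norm (indicator {0..s} t *\<^sub>R norm (f t))
                 \<le> norm (indicator {0..s} t *\<^sub>R ((norm (f t))\<^sup>2 + 1))"
      by (simp add: indicator_def)
  qed
qed

lemma norm_set_integral_mult_le:
  fixes f :: "real \<Rightarrow> 'w::{banach,second_countable_topology}"
  assumes f_meas: "(\<lambda>t. indicator {0..T} t *\<^sub>R f t) \<in> borel_measurable lborel"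
    and f_L2: "set_integrable lborel {0..T} (\<lambda>t. (norm (f t))\<^sup>2)"
    and "0 \<le> s" "s \<le> T" "0 \<le> c" "k > 0"
  shows "norm (LINT t:{0..s}|lborel. f t) * c
           \<le> (LINT t:{0..s}|lborel. (norm (f t))\<^sup>2) / k + s * k * c\<^sup>2 / 4"
proof -
  note integrable = set_integrable_on_initial_interval[OF f_meas f_L2 \<open>s \<le> T\<close>]
  have const: "set_integrable lborel {0..s} (\<lambda>t. k * c\<^sup>2 / 4)"
    by (simp add: set_integrable_def emeasure_lborel_Icc_eq integrable_real_indicator)
  have "norm (LINT t:{0..s}|lborel. f t) \<le> (LINT t:{0..s}|lborel. norm (f t))"
    using integral_norm_bound[of lborel "\<lambda>t. indicator {0..s} t *\<^sub>R f t"]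
    by (simp add: set_lebesgue_integral_def)
  then have "norm (LINT t:{0..s}|lborel. f t) * c \<le> (LINT t:{0..s}|lborel. c * norm (f t))"
    using \<open>0 \<le> c\<close> by (simp add: mult_left_mono mult.commute)
  also have "\<dots> \<le> (LINT t:{0..s}|lborel. (norm (f t))\<^sup>2 / k + k * c\<^sup>2 / 4)"
    using integrable const young_inequality_real[OF \<open>k > 0\<close>] by (intro set_integral_mono) auto
  also have "\<dots> = (LINT t:{0..s}|lborel. (norm (f t))\<^sup>2) / k + s * k * c\<^sup>2 / 4"
    using integrable const \<open>0 \<le> s\<close> by (simp add: set_integral_const)
  finally show ?thesis .
qed

lemma set_integral_initial_interval_tendsto_zero:
  fixes g :: "real \<Rightarrow> real"
  assumes "set_integrable lborel {0..T} g" and "T \<ge> 0"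
  shows "(\<lambda>N. LINT t:{0..T / real N}|lborel. g t) \<longlonglongrightarrow> 0"
proof -
  \<comment> \<open>Shifted by one since \<open>T / 0 = 0\<close>: the intervals decrease only from \<open>N = 1\<close> on.\<close>
  define I where "I i = {0..T / real (Suc i)}" for i
  have "decseq I"
    unfolding decseq_def I_def using \<open>T \<ge> 0\<close> by (auto intro!: divide_left_mono)
  have "(\<Inter>i. I i) = {0}"
  proof safe
    fix t assume t: "t \<in> (\<Inter>i. I i)"
    have "(\<lambda>i. T / real (Suc i)) \<longlonglongrightarrow> 0"
      by (rule LIMSEQ_Suc[OF lim_const_over_n])
    moreover have "0 \<le> t \<and> t \<le> T / real (Suc i)" for i
      using t by (auto simp: I_def)
    ultimately have "t \<le> 0"
      by (intro LIMSEQ_le_const) auto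
    with t show "t = 0"
      by (auto simp: I_def)
  qed (use \<open>T \<ge> 0\<close> in \<open>auto simp: I_def\<close>)
  moreover have "(\<lambda>i. LINT t:I i|lborel. g t) \<longlonglongrightarrow> (LINT t:(\<Inter>i. I i)|lborel. g t)"
    by (rule set_integral_cont_down[OF _ \<open>decseq I\<close>]) (use assms(1) in \<open>simp_all add: I_def\<close>)
  ultimately have "(\<lambda>i. LINT t:{0..T / real (Suc i)}|lborel. g t) \<longlonglongrightarrow> 0"
    by (simp add: I_def set_integral_at_point)
  then show ?thesis
    by (rule LIMSEQ_imp_Suc)
qed

lemma compact_map_convergent_subseq:
  fixes w :: "nat \<Rightarrow> 'a::real_normed_vector"
  assumes "compact_map L" and "bounded (range w)"
  obtains l r where "strict_mono r" and "(\<lambda>n. L (w (r n))) \<longlonglongrightarrow> l"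
proof -
  have "seq_compact (closure (L ` range w))"
    using assms by (simp add: compact_map_def compact_imp_seq_compact)
  moreover have "\<forall>n. L (w n) \<in> closure (L ` range w)"
    by (auto intro: closure_subset[THEN subsetD])
  ultimately obtain l r where "l \<in> closure (L ` range w)" "strict_mono r"
      "((\<lambda>n. L (w n)) \<circ> r) \<longlonglongrightarrow> l"
    by (rule seq_compactE)
  then show ?thesis
    using that by (simp add: o_def)
qed

lemma ehrling_inequality:
  fixes L :: "'v::real_normed_vector \<Rightarrow> 'z::real_normed_vector"
    and M :: "'z \<Rightarrow> 'h::real_normed_vector"
  assumes L: "bounded_linear L" "compact_map L" and M: "bounded_linear M" "inj M"
    and "\<epsilon> > 0"
  shows "\<exists>C\<ge>0. \<forall>v. norm (L v) \<le> \<epsilon> * norm v + C * norm (M (L v))"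
proof (rule ccontr)
  interpret L: bounded_linear L by fact
  interpret M: bounded_linear M by fact
  assume "\<not> ?thesis"
  then have "\<not> (\<forall>v. norm (L v) \<le> \<epsilon> * norm v + real n * norm (M (L v)))" for n
    by (meson of_nat_0_le_iff)
  then have violated: "\<exists>v. \<epsilon> * norm v + real n * norm (M (L v)) < norm (L v)" for n
    by (auto simp: not_le)
  have "\<exists>w. norm w = 1 \<and> \<epsilon> + real n * norm (M (L w)) < norm (L w)" for n
  proof -
    obtain v where v: "\<epsilon> * norm v + real n * norm (M (L v)) < norm (L v)"
      using violated by blast
    then have "v \<noteq> 0"
      using \<open>\<epsilon> > 0\<close> by auto
    then have "norm v > 0" by simp
    have "\<epsilon> + real n * norm (M (L (v /\<^sub>R norm v))) < norm (L (v /\<^sub>R norm v))"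
      using mult_strict_left_mono[OF v \<open>norm v > 0\<close>] \<open>norm v > 0\<close>
      by (simp add: L.scaleR M.scaleR field_simps)
    then show ?thesis
      using \<open>v \<noteq> 0\<close> by (intro exI[of _ "v /\<^sub>R norm v"]) simp
  qed
  then obtain w where w_unit: "\<And>n. norm (w n) = 1"
    and w: "\<And>n. \<epsilon> + real n * norm (M (L (w n))) < norm (L (w n))"
    by metis
  have "bounded (range w)"
    using w_unit by (auto simp: bounded_iff)
  then obtain l r where "strict_mono r" and lim: "(\<lambda>n. L (w (r n))) \<longlonglongrightarrow> l"
    using compact_map_convergent_subseq[OF L(2)] by blast
  have "\<epsilon> \<le> norm l"
  proof (rule tendsto_lowerbound[OF tendsto_norm[OF lim]])
    show "\<forall>\<^sub>F n in sequentially. \<epsilon> \<le> norm (L (w (r n)))"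
    proof (intro always_eventually allI)
      fix n
      have "0 \<le> real (r n) * norm (M (L (w (r n))))" by simp
      then show "\<epsilon> \<le> norm (L (w (r n)))"
        using w[of "r n"] by linarith
    qed
  qed simp
  obtain K where K: "\<And>x. norm (L x) \<le> norm x * K"
    using L.bounded by blast
  have r_at_top: "filterlim r at_top sequentially"
    using \<open>strict_mono r\<close> by (rule filterlim_subseq)
  have "(\<lambda>n. norm (M (L (w (r n))))) \<longlonglongrightarrow> 0"
  proof (rule tendsto_sandwich[where f="\<lambda>_. 0"])
    have "\<forall>\<^sub>F n in sequentially. r n \<ge> 1"
      using r_at_top by (simp add: filterlim_at_top)
    then show "\<forall>\<^sub>F n in sequentially. norm (M (L (w (r n)))) \<le> K / real (r n)"
    proof eventually_elim
      case (elim n)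
      have "real (r n) * norm (M (L (w (r n)))) \<le> K"
        using w[of "r n"] K[of "w (r n)"] \<open>\<epsilon> > 0\<close> by (simp add: w_unit)
      then show ?case
        using elim by (simp add: field_simps)
    qed
    show "(\<lambda>n. K / real (r n)) \<longlonglongrightarrow> 0"
      using lim_const_over_n[of K] r_at_top by (rule filterlim_compose)
  qed auto
  moreover have "(\<lambda>n. norm (M (L (w (r n))))) \<longlonglongrightarrow> norm (M l)"
    by (intro tendsto_norm M.tendsto lim)
  ultimately have "M l = 0"
    using LIMSEQ_unique by fastforce
  then have "l = 0"
    using \<open>inj M\<close> M.zero by (metis injD)
  with \<open>\<epsilon> \<le> norm l\<close> \<open>\<epsilon> > 0\<close> show False
    by simp
qed

lemma ehrling_inequality_squared:
  fixes L :: "'v::real_normed_vector \<Rightarrow> 'z::real_normed_vector"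
    and M :: "'z \<Rightarrow> 'h::real_normed_vector" and P :: "'z \<Rightarrow> 'u::real_normed_vector"
  assumes L: "bounded_linear L" "compact_map L" and M: "bounded_linear M" "inj M"
    and P: "bounded_linear P" and "\<epsilon> > 0"
  shows "\<exists>C\<ge>0. \<forall>v. (norm (P (L v)))\<^sup>2 \<le> \<epsilon> * (norm v)\<^sup>2 + C * (norm (M (L v)))\<^sup>2"
proof -
  obtain K where "K > 0" and K: "\<And>z. norm (P z) \<le> norm z * K"
    using bounded_linear.pos_bounded[OF P] by blast
  define \<delta> where "\<delta> = sqrt (\<epsilon> / 2) / K"
  have "\<delta> > 0"
    using \<open>\<epsilon> > 0\<close> \<open>K > 0\<close> by (simp add: \<delta>_def)
  then obtain C where "C \<ge> 0" and C: "\<And>v. norm (L v) \<le> \<delta> * norm v + C * norm (M (L v))"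
    using ehrling_inequality[OF L M] by blast
  show ?thesis
  proof (intro exI conjI allI)
    fix v
    have "norm (P (L v)) \<le> (\<delta> * norm v + C * norm (M (L v))) * K"
      using K[of "L v"] mult_right_mono[OF C[of v], of K] \<open>K > 0\<close> by linarith
    also have "\<dots> = sqrt (\<epsilon> / 2) * norm v + K * C * norm (M (L v))"
      using \<open>K > 0\<close> by (simp add: \<delta>_def field_simps)
    finally have "(norm (P (L v)))\<^sup>2 \<le> (sqrt (\<epsilon> / 2) * norm v + K * C * norm (M (L v)))\<^sup>2"
      by (simp add: power_mono)
    also have "\<dots> \<le> 2 * (sqrt (\<epsilon> / 2) * norm v)\<^sup>2 + 2 * (K * C * norm (M (L v)))\<^sup>2"
      by (rule square_sum_le)
    also have "\<dots> = \<epsilon> * (norm v)\<^sup>2 + 2 * K\<^sup>2 * C\<^sup>2 * (norm (M (L v)))\<^sup>2"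
      using \<open>\<epsilon> > 0\<close> by (simp add: power_mult_distrib)
    finally show "(norm (P (L v)))\<^sup>2 \<le> \<epsilon> * (norm v)\<^sup>2 + 2 * K\<^sup>2 * C\<^sup>2 * (norm (M (L v)))\<^sup>2" .
  qed simp
qed

lemma tendsto_zero_by_approximation:
  fixes x :: "nat \<Rightarrow> 'a::real_normed_vector" and y :: "nat \<Rightarrow> 'b::real_normed_vector"
  assumes y: "y \<longlonglongrightarrow> y0" and "y0 \<in> closure S"
    and bound: "\<And>s. s \<in> S \<Longrightarrow>
      \<exists>r. r \<longlonglongrightarrow> 0 \<and> (\<forall>\<^sub>F n in sequentially. (norm (x n))\<^sup>2 \<le> c * (norm (y n - s))\<^sup>2 + r n)"
  shows "x \<longlonglongrightarrow> 0"
proof (rule tendstoI)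
  fix \<eta> :: real
  assume "\<eta> > 0"
  obtain z where "\<And>k. z k \<in> S" and "z \<longlonglongrightarrow> y0"
    using \<open>y0 \<in> closure S\<close> by (meson closure_sequential)
  then have "(\<lambda>k. c * (norm (y0 - z k))\<^sup>2) \<longlonglongrightarrow> c * (norm (y0 - y0))\<^sup>2"
    by (intro tendsto_intros)
  then obtain k where k: "c * (norm (y0 - z k))\<^sup>2 < \<eta>\<^sup>2"
    using order_tendstoD(2)[of _ 0 sequentially "\<eta>\<^sup>2"] \<open>\<eta> > 0\<close>
    by (auto simp: eventually_sequentially)
  obtain r where "r \<longlonglongrightarrow> 0"
    and x_bound: "\<forall>\<^sub>F n in sequentially. (norm (x n))\<^sup>2 \<le> c * (norm (y n - z k))\<^sup>2 + r n"
    using bound[OF \<open>z k \<in> S\<close>] by blast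
  have "(\<lambda>n. c * (norm (y n - z k))\<^sup>2 + r n) \<longlonglongrightarrow> c * (norm (y0 - z k))\<^sup>2 + 0"
    by (intro tendsto_intros y \<open>r \<longlonglongrightarrow> 0\<close>)
  then have "\<forall>\<^sub>F n in sequentially. c * (norm (y n - z k))\<^sup>2 + r n < \<eta>\<^sup>2"
    using k by (intro order_tendstoD(2)) auto
  with x_bound show "\<forall>\<^sub>F n in sequentially. dist (x n) 0 < \<eta>"
  proof eventually_elim
    case (elim n)
    then have "(norm (x n))\<^sup>2 < \<eta>\<^sup>2" by linarith
    then show ?case
      using \<open>\<eta> > 0\<close> by (simp add: power2_less_imp_less)
  qed
qed

lemma pair_embH:
  assumes "bij D" and "bounded_linear iV"
  shows "pair D (embH D iV h) v = inner h (iV v)"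
proof -
  have "bounded_linear (\<lambda>v. inner h (iV v))"
    using bounded_linear_inner_right assms(2) by (rule bounded_linear_compose)
  then show ?thesis
    using \<open>bij D\<close>
    by (simp add: pair_def embH_def bij_is_surj surj_f_inv_f bounded_linear_Blinfun_apply)
qed

lemma pair_adj:
  assumes "bij D" and "bounded_linear \<iota>"
  shows "pair D (adj D \<iota> \<xi>) v = blinfun_apply \<xi> (\<iota> v)"
proof -
  have "bounded_linear (\<lambda>v. blinfun_apply \<xi> (\<iota> v))"
    using blinfun.bounded_linear_right assms(2) by (rule bounded_linear_compose)
  then show ?thesis
    using \<open>bij D\<close>
    by (simp add: pair_def adj_def bij_is_surj surj_f_inv_f bounded_linear_Blinfun_apply)
qed

lemma pair_add_left:
  "bounded_linear D \<Longrightarrow> pair D (w + w') v = pair D w v + pair D w' v"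
  by (simp add: pair_def linear_simps plus_blinfun.rep_eq)

lemma pair_scaleR_left:
  "bounded_linear D \<Longrightarrow> pair D (c *\<^sub>R w) v = c * pair D w v"
  by (simp add: pair_def linear_simps scaleR_blinfun.rep_eq)

lemma pair_diff_right: "pair D w (x - y) = pair D w x - pair D w y"
  by (simp add: pair_def blinfun.diff_right)

lemma abs_pair_le:
  assumes "\<And>w. norm (D w) = norm w"
  shows "\<bar>pair D w v\<bar> \<le> norm w * norm v"
  using norm_blinfun[of "D w" v] assms by (simp add: pair_def)

text \<open>The compactness hypothesis on \<open>\<iota>\<close> enters only through the Ehrling inequality \<open>ehrling\<close>,
  with \<open>\<epsilon>\<close> small enough for the growth of \<open>\<partial>J\<close> to be absorbed by the coercivity of \<open>A\<close>.\<close>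
locale rothe_first_step =
  fixes D :: "'w::{banach,second_countable_topology} \<Rightarrow> ('v::real_normed_vector \<Rightarrow>\<^sub>L real)"
    and iV :: "'v \<Rightarrow> 'h::real_inner" and A :: "'v \<Rightarrow> 'w" and \<iota> :: "'v \<Rightarrow> 'u::real_normed_vector"
    and J :: "'u \<Rightarrow> real" and f :: "real \<Rightarrow> 'w"
    and T a b \<alpha> \<beta> d \<epsilon> C :: real
  assumes T_pos: "T > 0"
    and D_lin: "bounded_linear D" and D_bij: "bij D" and D_isom: "\<And>w. norm (D w) = norm w"
    and iV_lin: "bounded_linear iV" and \<iota>_lin: "bounded_linear \<iota>"
    and A_bound: "\<And>v. norm (A v) \<le> a + b * norm v"
    and \<alpha>_pos: "\<alpha> > 0" and \<beta>_nonneg: "\<beta> \<ge> 0"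
    and A_coerc: "\<And>v. pair D (A v) v \<ge> \<alpha> * (norm v)\<^sup>2 - \<beta> * (norm (iV v))\<^sup>2"
    and d_nonneg: "d \<ge> 0"
    and J_growth: "\<And>x \<zeta>. \<zeta> \<in> clarke_subdiff J x \<Longrightarrow> norm \<zeta> \<le> d * (1 + norm x)"
    and ehrling: "\<And>v. (norm (\<iota> v))\<^sup>2 \<le> \<epsilon> * (norm v)\<^sup>2 + C * (norm (iV v))\<^sup>2"
    and \<epsilon>_small: "(3 * d + 2) * \<epsilon> \<le> \<alpha> / 4" and C_nonneg: "C \<ge> 0"
    and f_meas: "(\<lambda>t. indicator {0..T} t *\<^sub>R f t) \<in> borel_measurable lborel"
    and f_L2: "set_integrable lborel {0..T} (\<lambda>t. (norm (f t))\<^sup>2)"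
begin

definition energy :: "real \<Rightarrow> real" where
  "energy s = (LINT t:{0..s}|lborel. (norm (f t))\<^sup>2)"

definition garding_const :: real where
  "garding_const = \<beta> + (3 * d / 2 + 1) * C"

definition test_const :: "'v \<Rightarrow> real" where
  "test_const v = d / 2 + a * norm v + 2 * b\<^sup>2 * (norm v)\<^sup>2 / \<alpha>
     + d * norm (\<iota> v) + d\<^sup>2 * (norm (\<iota> v))\<^sup>2 / 4"

definition test_residual :: "real \<Rightarrow> 'v \<Rightarrow> real" where
  "test_residual \<tau> v = energy \<tau> / \<alpha> + (energy \<tau> + \<tau> / 4) * norm v + \<tau> * test_const v"

definition first_step_residual :: "real \<Rightarrow> 'v \<Rightarrow> real \<Rightarrow> real" where
  "first_step_residual \<tau> v p = test_residual \<tau> v + 2 * \<tau> * garding_const * p\<^sup>2"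

lemma garding_const_nonneg: "garding_const \<ge> 0"
  using \<beta>_nonneg d_nonneg C_nonneg by (simp add: garding_const_def)

lemma garding_inequality:
  assumes "\<xi> \<in> clarke_subdiff J (\<iota> u)"
  shows "3 * \<alpha> / 4 * (norm u)\<^sup>2 - garding_const * (norm (iV u))\<^sup>2 - test_const v
           \<le> pair D (A u) (u - v) + blinfun_apply \<xi> (\<iota> u - \<iota> v)"
proof -
  define X Y Q where "X = norm u" and "Y = norm (\<iota> u)" and "Q = norm (iV u)"
  have \<xi>_bound: "\<bar>blinfun_apply \<xi> z\<bar> \<le> d * (1 + Y) * norm z" for z
    using norm_blinfun[of \<xi> z] mult_right_mono[OF J_growth[OF assms] norm_ge_zero[of z]]
    by (simp add: Y_def)
  have "pair D (A u) v \<le> (a + b * X) * norm v"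
    using abs_pair_le[OF D_isom, of "A u" v] mult_right_mono[OF A_bound[of u] norm_ge_zero[of v]]
    by (simp add: X_def)
  moreover have "b * norm v * X \<le> \<alpha> * X\<^sup>2 / 8 + 2 * b\<^sup>2 * (norm v)\<^sup>2 / \<alpha>"
    using young_inequality_real[of "8 / \<alpha>" "b * norm v" X] \<alpha>_pos
    by (simp add: power_mult_distrib mult_ac)
  ultimately have A_test: "pair D (A u) v \<le> a * norm v + \<alpha> * X\<^sup>2 / 8 + 2 * b\<^sup>2 * (norm v)\<^sup>2 / \<alpha>"
    by (simp add: algebra_simps)
  have "- blinfun_apply \<xi> (\<iota> u) \<le> d * (1 + Y) * Y"
    using \<xi>_bound[of "\<iota> u"] by (simp add: Y_def)
  moreover have "Y \<le> Y\<^sup>2 / 2 + 1 / 2"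
    using young_inequality_real[of 2 1 Y] by simp
  ultimately have \<xi>_u: "- blinfun_apply \<xi> (\<iota> u) \<le> d / 2 + 3 * d / 2 * Y\<^sup>2"
    using d_nonneg mult_left_mono[of Y "Y\<^sup>2 / 2 + 1 / 2" d]
    by (simp add: algebra_simps power2_eq_square)
  have "blinfun_apply \<xi> (\<iota> v) \<le> d * (1 + Y) * norm (\<iota> v)"
    using \<xi>_bound[of "\<iota> v"] by simp
  moreover have "d * norm (\<iota> v) * Y \<le> Y\<^sup>2 + d\<^sup>2 * (norm (\<iota> v))\<^sup>2 / 4"
    using young_inequality_real[of 1 "d * norm (\<iota> v)" Y] by (simp add: power_mult_distrib)
  ultimately have \<xi>_v: "blinfun_apply \<xi> (\<iota> v) \<le> d * norm (\<iota> v) + Y\<^sup>2 + d\<^sup>2 * (norm (\<iota> v))\<^sup>2 / 4"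
    by (simp add: algebra_simps)
  have "(3 * d / 2 + 1) * Y\<^sup>2 \<le> (3 * d / 2 + 1) * (\<epsilon> * X\<^sup>2 + C * Q\<^sup>2)"
    using ehrling[of u] d_nonneg by (simp add: X_def Y_def Q_def)
  also have "\<dots> \<le> \<alpha> / 8 * X\<^sup>2 + (3 * d / 2 + 1) * C * Q\<^sup>2"
    using mult_right_mono[OF \<epsilon>_small, of "X\<^sup>2"] by (simp add: algebra_simps)
  finally have absorb: "(3 * d / 2 + 1) * Y\<^sup>2 \<le> \<alpha> / 8 * X\<^sup>2 + (3 * d / 2 + 1) * C * Q\<^sup>2" .
  have "pair D (A u) u \<ge> \<alpha> * X\<^sup>2 - \<beta> * Q\<^sup>2"
    using A_coerc[of u] by (simp add: X_def Q_def)
  with A_test \<xi>_u \<xi>_v absorb show ?thesis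
    by (simp add: pair_diff_right blinfun.diff_right garding_const_def test_const_def X_def Q_def
        algebra_simps)
qed

lemma load_test_bound:
  assumes "0 \<le> s" "s \<le> T"
  shows "pair D (LINT t:{0..s}|lborel. f t) (u - v)
           \<le> energy s / \<alpha> + s * \<alpha> * (norm u)\<^sup>2 / 4 + (energy s + s / 4) * norm v"
proof -
  define I where "I = (LINT t:{0..s}|lborel. f t)"
  have "norm I * norm u \<le> energy s / \<alpha> + s * \<alpha> * (norm u)\<^sup>2 / 4"
    using norm_set_integral_mult_le[OF f_meas f_L2 assms norm_ge_zero \<alpha>_pos]
    by (simp add: I_def energy_def)
  moreover have "norm I * norm v \<le> (energy s + s / 4) * norm v"
    using norm_set_integral_mult_le[OF f_meas f_L2 assms, of 1 1]
    by (intro mult_right_mono) (simp_all add: I_def energy_def)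
  ultimately show ?thesis
    using abs_pair_le[OF D_isom, of I u] abs_pair_le[OF D_isom, of I v]
    by (simp add: pair_diff_right flip: I_def)
qed

lemma first_step_equation_tested:
  assumes "rothe_solution D iV A \<iota> J f T N u0 u \<xi>" and "N \<ge> 1"
  shows "inner (iV (u 1) - iV u0) (iV x)
           + T / N * (pair D (A (u 1)) x + blinfun_apply (\<xi> 1) (\<iota> x))
           = pair D (LINT t:{0..T / N}|lborel. f t) x"
proof -
  define \<tau> where "\<tau> = T / N"
  have "embH D iV (iV ((1 / \<tau>) *\<^sub>R (u 1 - u0))) + A (u 1) + adj D \<iota> (\<xi> 1)
          = (1 / \<tau>) *\<^sub>R (LINT t:{0..\<tau>}|lborel. f t)"
    using assms(1) by (auto simp: rothe_solution_def f_tau_def \<tau>_def Let_def)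
  then have "inner (iV ((1 / \<tau>) *\<^sub>R (u 1 - u0))) (iV x) + pair D (A (u 1)) x
               + blinfun_apply (\<xi> 1) (\<iota> x)
               = (1 / \<tau>) * pair D (LINT t:{0..\<tau>}|lborel. f t) x"
    by (drule_tac arg_cong[where f="\<lambda>w. pair D w x"])
      (simp add: pair_add_left[OF D_lin] pair_scaleR_left[OF D_lin] pair_embH[OF D_bij iV_lin]
        pair_adj[OF D_bij \<iota>_lin])
  then show ?thesis
    using T_pos \<open>N \<ge> 1\<close> by (simp add: \<tau>_def linear_simps iV_lin inner_diff_left field_simps)
qed

lemma first_step_energy_inequality:
  assumes sol: "rothe_solution D iV A \<iota> J f T N u0 u \<xi>" and "N \<ge> 1"
  shows "(norm (iV (u 1) - iV u0))\<^sup>2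
           \<le> norm (iV (u 1) - iV u0) * norm (iV u0 - iV v) + test_residual (T / N) v
             + T / N * garding_const * (norm (iV (u 1)))\<^sup>2"
proof -
  define \<tau> e where "\<tau> = T / N" and "e = iV (u 1) - iV u0"
  have "0 \<le> \<tau>" "\<tau> \<le> T"
    using T_pos \<open>N \<ge> 1\<close> by (auto simp: \<tau>_def field_simps)
  have "\<xi> 1 \<in> clarke_subdiff J (\<iota> (u 1))"
    using sol \<open>N \<ge> 1\<close> by (simp add: rothe_solution_def Let_def)
  have "inner e (iV (u 1 - v))
          + \<tau> * (pair D (A (u 1)) (u 1 - v) + blinfun_apply (\<xi> 1) (\<iota> (u 1 - v)))
          = pair D (LINT t:{0..\<tau>}|lborel. f t) (u 1 - v)"
    using first_step_equation_tested[OF sol \<open>N \<ge> 1\<close>] by (simp add: e_def \<tau>_def)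
  moreover have "inner e (iV (u 1 - v)) = (norm e)\<^sup>2 + inner e (iV u0 - iV v)"
    by (simp add: e_def linear_simps iV_lin inner_diff_right power2_norm_eq_inner)
  moreover have "- inner e (iV u0 - iV v) \<le> norm e * norm (iV u0 - iV v)"
    using Cauchy_Schwarz_ineq2[of e "iV u0 - iV v"] by simp
  moreover have "3 / 4 * (\<tau> * \<alpha> * (norm (u 1))\<^sup>2) - \<tau> * garding_const * (norm (iV (u 1)))\<^sup>2
                   - \<tau> * test_const v
                   \<le> \<tau> * (pair D (A (u 1)) (u 1 - v) + blinfun_apply (\<xi> 1) (\<iota> (u 1 - v)))"
  proof -
    have "\<tau> * (3 * \<alpha> / 4 * (norm (u 1))\<^sup>2 - garding_const * (norm (iV (u 1)))\<^sup>2 - test_const v)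
            \<le> \<tau> * (pair D (A (u 1)) (u 1 - v) + blinfun_apply (\<xi> 1) (\<iota> (u 1 - v)))"
      using garding_inequality[OF \<open>\<xi> 1 \<in> _\<close>] \<open>0 \<le> \<tau>\<close>
      by (intro mult_left_mono) (simp_all add: linear_simps \<iota>_lin)
    then show ?thesis
      by (simp add: algebra_simps)
  qed
  moreover have "pair D (LINT t:{0..\<tau>}|lborel. f t) (u 1 - v)
                   \<le> energy \<tau> / \<alpha> + \<tau> * \<alpha> * (norm (u 1))\<^sup>2 / 4 + (energy \<tau> + \<tau> / 4) * norm v"
    by (rule load_test_bound[OF \<open>0 \<le> \<tau>\<close> \<open>\<tau> \<le> T\<close>])
  moreover have "0 \<le> \<tau> * \<alpha> * (norm (u 1))\<^sup>2"
    using \<open>0 \<le> \<tau>\<close> \<alpha>_pos by simp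
  ultimately show ?thesis
    unfolding test_residual_def \<tau>_def [symmetric] e_def [symmetric] by linarith
qed

lemma first_step_estimate:
  assumes sol: "rothe_solution D iV A \<iota> J f T N u0 u \<xi>" and "N \<ge> 1"
    and small: "8 * (T / N) * garding_const \<le> 1"
  shows "(norm (iV (u 1) - iV u0))\<^sup>2
           \<le> 2 * (norm (iV u0 - iV v))\<^sup>2 + 2 * first_step_residual (T / N) v (norm (iV u0))"
proof -
  define \<tau> E \<delta> where "\<tau> = T / N" and "E = norm (iV (u 1) - iV u0)"
    and "\<delta> = norm (iV u0 - iV v)"
  have "0 \<le> \<tau>"
    using T_pos by (simp add: \<tau>_def)
  have "E * \<delta> \<le> E\<^sup>2 / 4 + \<delta>\<^sup>2"
    using young_inequality_real[of 4 \<delta> E] by (simp add: mult.commute)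
  moreover have "\<tau> * garding_const * (norm (iV (u 1)))\<^sup>2
                   \<le> 2 * \<tau> * garding_const * (norm (iV u0))\<^sup>2 + 2 * \<tau> * garding_const * E\<^sup>2"
  proof -
    have "(norm (iV (u 1)))\<^sup>2 \<le> (norm (iV u0) + E)\<^sup>2"
      using norm_triangle_ineq[of "iV u0" "iV (u 1) - iV u0"]
      by (intro power_mono) (simp_all add: E_def)
    also have "\<dots> \<le> 2 * (norm (iV u0))\<^sup>2 + 2 * E\<^sup>2"
      by (rule square_sum_le)
    finally have "\<tau> * garding_const * (norm (iV (u 1)))\<^sup>2
                    \<le> \<tau> * garding_const * (2 * (norm (iV u0))\<^sup>2 + 2 * E\<^sup>2)"
      using \<open>0 \<le> \<tau>\<close> garding_const_nonneg by (intro mult_left_mono) simp_all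
    then show ?thesis
      by (simp add: algebra_simps)
  qed
  moreover have "2 * \<tau> * garding_const * E\<^sup>2 \<le> E\<^sup>2 / 4"
    using mult_right_mono[OF small, of "E\<^sup>2"] by (simp add: \<tau>_def)
  ultimately have "E\<^sup>2 / 2 \<le> \<delta>\<^sup>2 + first_step_residual \<tau> v (norm (iV u0))"
    using first_step_energy_inequality[OF sol \<open>N \<ge> 1\<close>, of v]
    unfolding first_step_residual_def \<tau>_def [symmetric] E_def [symmetric] \<delta>_def [symmetric]
    by linarith
  then show ?thesis
    by (simp add: E_def \<delta>_def \<tau>_def)
qed

lemma first_step_residual_tendsto_zero:
  assumes "p \<longlonglongrightarrow> p0"
  shows "(\<lambda>N. first_step_residual (T / real N) v (p N)) \<longlonglongrightarrow> 0"
proof -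
  have "(\<lambda>N. energy (T / real N)) \<longlonglongrightarrow> 0"
    unfolding energy_def using f_L2 T_pos by (intro set_integral_initial_interval_tendsto_zero) auto
  moreover have "(\<lambda>N. T / real N) \<longlonglongrightarrow> 0"
    by (rule lim_const_over_n)
  ultimately have "(\<lambda>N. first_step_residual (T / real N) v (p N)) \<longlonglongrightarrow>
      0 / \<alpha> + (0 + 0 / 4) * norm v + 0 * test_const v + 2 * 0 * garding_const * p0\<^sup>2"
    unfolding first_step_residual_def test_residual_def using \<alpha>_pos
    by (intro tendsto_intros assms) auto
  then show ?thesis
    by simp
qed

theorem first_step_difference_tendsto_zero:
  assumes sol: "\<forall>\<^sub>F N in sequentially. rothe_solution D iV A \<iota> J f T N (u0t N) (u N) (\<xi> N)"
    and u0t: "(\<lambda>N. iV (u0t N)) \<longlonglongrightarrow> u0" and "u0 \<in> closure (range iV)"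
  shows "(\<lambda>N. iV (u N 1) - iV (u0t N)) \<longlonglongrightarrow> 0"
proof (rule tendsto_zero_by_approximation[OF u0t \<open>u0 \<in> _\<close>])
  fix s
  assume "s \<in> range iV"
  then obtain v where "s = iV v"
    by blast
  have "(\<lambda>N. 8 * (T / real N) * garding_const) \<longlonglongrightarrow> 8 * 0 * garding_const"
    by (intro tendsto_intros lim_const_over_n)
  then have "\<forall>\<^sub>F N in sequentially. 8 * (T / real N) * garding_const < 1"
    by (rule order_tendstoD) simp
  then have "\<forall>\<^sub>F N in sequentially. 8 * (T / real N) * garding_const \<le> 1"
    by (rule eventually_mono) simp
  then have "\<forall>\<^sub>F N in sequentially. (norm (iV (u N 1) - iV (u0t N)))\<^sup>2
      \<le> 2 * (norm (iV (u0t N) - s))\<^sup>2 + 2 * first_step_residual (T / N) v (norm (iV (u0t N)))"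
    using sol eventually_ge_at_top[of 1] unfolding \<open>s = iV v\<close>
    by eventually_elim (rule first_step_estimate)
  moreover have "(\<lambda>N. 2 * first_step_residual (T / N) v (norm (iV (u0t N)))) \<longlonglongrightarrow> 0"
    using first_step_residual_tendsto_zero[OF tendsto_norm[OF u0t]]
    by (rule tendsto_mult_right_zero)
  ultimately show "\<exists>r. r \<longlonglongrightarrow> 0 \<and> (\<forall>\<^sub>F N in sequentially. (norm (iV (u N 1) - iV (u0t N)))\<^sup>2
      \<le> 2 * (norm (iV (u0t N) - s))\<^sup>2 + r N)"
    by blast
qed

end

theorem lemma4p2:
  fixes iV :: "'v::{banach,second_countable_topology} \<Rightarrow> 'h::{real_inner,complete_space,second_countable_topology}"
    and D :: "'w::{banach,second_countable_topology} \<Rightarrow> ('v \<Rightarrow>\<^sub>L real)"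
    and A :: "'v \<Rightarrow> 'w"
    and J :: "'u::banach \<Rightarrow> real"
    and \<iota> :: "'v \<Rightarrow> 'u"
    and iZ1 :: "'v \<Rightarrow> 'z::banach" and iZ2 :: "'z \<Rightarrow> 'h" and \<iota>2 :: "'z \<Rightarrow> 'u"
    and f :: "real \<Rightarrow> 'w" and T :: real and u0 :: 'h
    and a b \<alpha> \<beta> d c0 :: real
    and u0t :: "nat \<Rightarrow> 'v"
    and u :: "nat \<Rightarrow> nat \<Rightarrow> 'v" and \<xi> :: "nat \<Rightarrow> nat \<Rightarrow> ('u \<Rightarrow>\<^sub>L real)"
  assumes T_pos: "T > 0"
    (* spaces and embeddings V \<subset> H \<subset> V* *)
    and V_refl: "reflexive_space TYPE('v)"
    and U_refl: "reflexive_space TYPE('u)"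
    and iV_lin: "bounded_linear iV" and iV_inj: "inj iV"
    and iV_dense: "closure (range iV) = UNIV"
    and iV_compact: "compact_map iV"
    and D_lin: "bounded_linear D" and D_bij: "bij D" and D_isom: "\<And>w. norm (D w) = norm w"
    and H_dense: "closure (range (embH D iV)) = UNIV"
    (* H(A) *)
    and A_pm: "pseudomonotone D A"
    and A_bound: "a \<ge> 0" "b > 0" "\<And>v. norm (A v) \<le> a + b * norm v"
    and A_coerc: "\<alpha> > 0" "\<beta> \<ge> 0"
                 "\<And>v. pair D (A v) v \<ge> \<alpha> * (norm v)\<^sup>2 - \<beta> * (norm (iV v))\<^sup>2"
    (* H(J) *)
    and J_lip: "locally_lipschitz J"
    and J_growth: "d > 0" "\<And>x \<zeta>. \<zeta> \<in> clarke_subdiff J x \<Longrightarrow> norm \<zeta> \<le> d * (1 + norm x)"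
    (* H(iota) *)
    and iota_lin: "bounded_linear \<iota>" and iota_compact: "compact_map \<iota>"
    and iZ1_lin: "bounded_linear iZ1" and iZ1_inj: "inj iZ1" and iZ1_compact: "compact_map iZ1"
    and iZ2_lin: "bounded_linear iZ2" and iZ2_inj: "inj iZ2"
    and iV_factor: "\<And>v. iV v = iZ2 (iZ1 v)"
    and iota2_lin: "bounded_linear \<iota>2"
    and iota_factor: "\<And>v. \<iota> v = \<iota>2 (iZ1 v)"
    (* H(f) *)
    and f_meas: "(\<lambda>t. indicator {0..T} t *\<^sub>R f t) \<in> borel_measurable lborel"
    and f_L2: "set_integrable lborel {0..T} (\<lambda>t. (norm (f t))\<^sup>2)"
    (* initial data of the scheme, indexed by N with tau = T/N *)
    and u0t_conv: "(\<lambda>N. iV (u0t N)) \<longlonglongrightarrow> u0"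
    and u0t_bound: "\<And>N. N \<ge> 1 \<Longrightarrow> norm (u0t N) \<le> c0 / sqrt (T / real N)"
    (* solutions of P_tau for all sufficiently small tau *)
    and sol: "eventually (\<lambda>N. rothe_solution D iV A \<iota> J f T N (u0t N) (u N) (\<xi> N)) sequentially"
  shows "(\<lambda>N. iV (u N 1) - iV (u0t N)) \<longlonglongrightarrow> 0"
proof -
  define \<epsilon> where "\<epsilon> = \<alpha> / (4 * (3 * d + 2))"
  have "\<epsilon> > 0"
    using A_coerc(1) J_growth(1) by (simp add: \<epsilon>_def)
  obtain C where "C \<ge> 0" and ehrling: "\<And>v. (norm (\<iota> v))\<^sup>2 \<le> \<epsilon> * (norm v)\<^sup>2 + C * (norm (iV v))\<^sup>2"
    using ehrling_inequality_squared[OF iZ1_lin iZ1_compact iZ2_lin iZ2_inj iota2_lin \<open>\<epsilon> > 0\<close>]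
    by (auto simp: iV_factor iota_factor)
  have "(3 * d + 2) * \<epsilon> \<le> \<alpha> / 4" and "d \<ge> 0"
    using J_growth(1) by (simp_all add: \<epsilon>_def field_simps)
  interpret rothe_first_step D iV A \<iota> J f T a b \<alpha> \<beta> d \<epsilon> C
    by (rule rothe_first_step.intro)
      (fact T_pos D_lin D_bij D_isom iV_lin iota_lin A_bound(3) A_coerc J_growth(2) ehrling
        \<open>C \<ge> 0\<close> \<open>d \<ge> 0\<close> \<open>(3 * d + 2) * \<epsilon> \<le> \<alpha> / 4\<close> f_meas f_L2)+
  show ?thesis
    using sol u0t_conv iV_dense by (intro first_step_difference_tendsto_zero) auto
qed

end
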